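(* Let $\mathcal{F}$ be a $3$-uniform linear family and $\mathcal{M}$ a maximum matching of $\mathcal{F}$. Then for all distinct $A,B\in\mathcal{M}$, $|D_2(A,B)|\leq 8$.
   Context: A family is a finite collection of distinct subsets of a vertex set; $3$-uniform means every member has exactly $3$ elements and linear means any two distinct members share at most one vertex. A matching is a collection of pairwise disjoint members; a maximum matching is one of largest possible size. $X_{\mathcal{M}}=\bigcup_{A\in\mathcal{M}}A$, $D_2(\mathcal{F})=\{E\in\mathcal{F}:|E\cap X_{\mathcal{M}}|=2\}$, and for $A,B\in\mathcal{M}$, $D_2(A,B)=\{C\in D_2(\mathcal{F}): C\cap A\neq\emptyset,\ C\cap B\neq\emptyset\}$. *)

theory Defs
  imports Main
begin

definition uniform3 :: "'a set set \<Rightarrow> bool" where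
  "uniform3 F \<longleftrightarrow> (\<forall>E\<in>F. card E = 3)"

definition linear_family :: "'a set set \<Rightarrow> bool" where
  "linear_family F \<longleftrightarrow> (\<forall>E\<in>F. \<forall>E'\<in>F. E \<noteq> E' \<longrightarrow> card (E \<inter> E') \<le> 1)"

definition matching :: "'a set set \<Rightarrow> 'a set set \<Rightarrow> bool" where
  "matching F M \<longleftrightarrow> M \<subseteq> F \<and> (\<forall>A\<in>M. \<forall>B\<in>M. A \<noteq> B \<longrightarrow> A \<inter> B = {})"

definition maximum_matching :: "'a set set \<Rightarrow> 'a set set \<Rightarrow> bool" where
  "maximum_matching F M \<longleftrightarrow> matching F M \<and> (\<forall>M'. matching F M' \<longrightarrow> card M' \<le> card M)"

definition D2 :: "'a set set \<Rightarrow> 'a set set \<Rightarrow> 'a set set" where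
  "D2 F M = {E\<in>F. card (E \<inter> \<Union>M) = 2}"

definition D2_pair :: "'a set set \<Rightarrow> 'a set set \<Rightarrow> 'a set \<Rightarrow> 'a set \<Rightarrow> 'a set set" where
  "D2_pair F M A B = {C\<in>D2 F M. C \<inter> A \<noteq> {} \<and> C \<inter> B \<noteq> {}}"

end

theory Submission
  imports Defs
begin

text \<open>
  A member of \<open>D\<^sub>2(A,B)\<close> consists of a vertex of \<open>A\<close>, a vertex of \<open>B\<close> and a vertex outside
  \<open>X\<^sub>M\<close>; by linearity each of the nine pairs in \<open>A \<times> B\<close> lies in at most one member, so
  \<open>|D\<^sub>2(A,B)| \<le> 9\<close>. If all nine pairs were covered, the outer vertices would form a
  \<open>3 \<times> 3\<close> array \<open>g a b\<close> with distinct entries in every row and column (linearity again).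
  Such an array has a transversal with three distinct entries, and the three corresponding
  members are pairwise disjoint and avoid \<open>X\<^sub>M\<close> outside \<open>A \<union> B\<close>: exchanging them for
  \<open>A\<close> and \<open>B\<close> would enlarge the maximum matching.
\<close>

lemma uniform3_finite: "uniform3 F \<Longrightarrow> E \<in> F \<Longrightarrow> finite E"
  unfolding uniform3_def by (simp add: card_ge_0_finite)

lemma matching_disjoint: "matching F M \<Longrightarrow> X \<in> M \<Longrightarrow> Y \<in> M \<Longrightarrow> X \<noteq> Y \<Longrightarrow> X \<inter> Y = {}"
  unfolding matching_def by blast

lemma matching_Un:
  assumes "matching F M" "matching F N" "\<Union>M \<inter> \<Union>N = {}"
  shows "matching F (M \<union> N)"
  unfolding matching_def
proof (intro conjI ballI impI)
  show "M \<union> N \<subseteq> F" using assms(1,2) unfolding matching_def by blast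
  fix X Y assume XY: "X \<in> M \<union> N" "Y \<in> M \<union> N" "X \<noteq> Y"
  have inside: "X \<inter> Y = {}" if "matching F K" "X \<in> K" "Y \<in> K" for K
    using matching_disjoint that XY(3) by blast
  have across: "X' \<inter> Y' = {}" if "X' \<in> M" "Y' \<in> N" for X' Y'
    using assms(3) that by blast
  from XY(1,2) show "X \<inter> Y = {}"
    using inside[OF assms(1)] inside[OF assms(2)] across across[of Y X] by blast
qed

lemma matching_Diff: "matching F M \<Longrightarrow> matching F (M - R)"
  unfolding matching_def by blast

lemma matching_finite: "finite F \<Longrightarrow> matching F M \<Longrightarrow> finite M"
  unfolding matching_def using finite_subset by blast

lemma maximum_matching_exchange:
  assumes "finite F" "maximum_matching F M" "R \<subseteq> M"
    and "matching F N" "{} \<notin> N" "\<Union>(M - R) \<inter> \<Union>N = {}"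
  shows "card N \<le> card R"
proof -
  have "matching F M" and max: "\<And>M'. matching F M' \<Longrightarrow> card M' \<le> card M"
    using assms(2) unfolding maximum_matching_def by auto
  have "finite M" "finite N"
    using matching_finite[OF assms(1)] \<open>matching F M\<close> assms(4) by blast+
  have "matching F ((M - R) \<union> N)"
    using matching_Un[OF matching_Diff[OF \<open>matching F M\<close>] assms(4,6)] .
  moreover have "X \<notin> M - R" if "X \<in> N" for X
  proof
    assume "X \<in> M - R"
    obtain x where "x \<in> X" using \<open>X \<in> N\<close> assms(5) by (metis ex_in_conv)
    then show False using \<open>X \<in> M - R\<close> \<open>X \<in> N\<close> assms(6) by blast
  qed
  then have "card ((M - R) \<union> N) = card (M - R) + card N"
    using \<open>finite M\<close> \<open>finite N\<close> by (intro card_Un_disjoint) auto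
  ultimately have "card (M - R) + card N \<le> card M"
    using max by metis
  moreover have "card (M - R) = card M - card R" "card R \<le> card M"
    using \<open>finite M\<close> assms(3) by (simp_all add: card_Diff_subset card_mono finite_subset)
  ultimately show ?thesis by linarith
qed

lemma linear_family_eq_if_two_common:
  assumes "linear_family F" "E \<in> F" "E' \<in> F" "finite E"
    and "x \<noteq> y" "{x, y} \<subseteq> E \<inter> E'"
  shows "E = E'"
proof (rule ccontr)
  assume "E \<noteq> E'"
  then have "card (E \<inter> E') \<le> 1"
    using assms(1-3) unfolding linear_family_def by blast
  moreover have "card {x, y} \<le> card (E \<inter> E')"
    using assms(4,6) by (intro card_mono) auto
  ultimately show False using \<open>x \<noteq> y\<close> by simp
qed

lemma card_le_card_covered_pairs:
  assumes "finite P"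
    and covers: "\<And>C. C \<in> D \<Longrightarrow> \<exists>p\<in>P. fst p \<in> C \<and> snd p \<in> C"
    and unique: "\<And>p C C'. p \<in> P \<Longrightarrow> C \<in> D \<Longrightarrow> C' \<in> D \<Longrightarrow>
       {fst p, snd p} \<subseteq> C \<inter> C' \<Longrightarrow> C = C'"
  shows "card D \<le> card {p\<in>P. \<exists>C\<in>D. fst p \<in> C \<and> snd p \<in> C}"
proof -
  obtain h where h: "\<And>C. C \<in> D \<Longrightarrow> h C \<in> P \<and> fst (h C) \<in> C \<and> snd (h C) \<in> C"
    using covers by metis
  have "inj_on h D"
    using h unique by (intro inj_onI) (metis Int_iff insert_subset empty_subsetI)
  moreover have "h ` D \<subseteq> {p\<in>P. \<exists>C\<in>D. fst p \<in> C \<and> snd p \<in> C}"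
    using h by blast
  ultimately show ?thesis
    using \<open>finite P\<close> by (intro card_inj_on_le) auto
qed

lemma D2_pair_member_eq:
  assumes "uniform3 F" and "A \<in> M" "B \<in> M" "A \<inter> B = {}"
    and "C \<in> D2_pair F M A B" "a \<in> C \<inter> A" "b \<in> C \<inter> B"
  shows "\<exists>c. C = {a, b, c} \<and> c \<notin> \<Union>M"
proof -
  have "C \<in> F" and two: "card (C \<inter> \<Union>M) = 2"
    using assms(5) unfolding D2_pair_def D2_def by auto
  then have "card C = 3" using assms(1) unfolding uniform3_def by blast
  then have "finite C" by (intro card_ge_0_finite) simp
  have "a \<noteq> b" using assms(4,6,7) by blast
  then have "{a, b} \<subseteq> C \<inter> \<Union>M" "card {a, b} = 2"
    using assms(2,3,6,7) by auto
  then have inside: "C \<inter> \<Union>M = {a, b}"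
    using two \<open>finite C\<close> by (intro card_seteq[symmetric]) auto
  have "card (C - \<Union>M) = 1"
    using \<open>card C = 3\<close> two \<open>finite C\<close> by (simp add: card_Diff_subset_Int)
  then obtain c where "C - \<Union>M = {c}" by (auto simp: card_Suc_eq)
  with inside have "C = {a, b, c}" by blast
  with \<open>C - \<Union>M = {c}\<close> show ?thesis by blast
qed

lemma latin_3x3_transversal:
  fixes g :: "'a \<Rightarrow> 'b \<Rightarrow> 'c"
  assumes rows: "\<And>x. x \<in> {a1, a2, a3} \<Longrightarrow> g x b1 \<noteq> g x b2 \<and> g x b1 \<noteq> g x b3 \<and> g x b2 \<noteq> g x b3"
    and cols: "\<And>y. y \<in> {b1, b2, b3} \<Longrightarrow> g a1 y \<noteq> g a2 y \<and> g a1 y \<noteq> g a3 y \<and> g a2 y \<noteq> g a3 y"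
  shows "\<exists>(y1, y2, y3) \<in> {(b1, b2, b3), (b1, b3, b2), (b2, b1, b3), (b2, b3, b1), (b3, b1, b2), (b3, b2, b1)}.
    g a1 y1 \<noteq> g a2 y2 \<and> g a1 y1 \<noteq> g a3 y3 \<and> g a2 y2 \<noteq> g a3 y3"
proof -
  have "g a1 b1 \<noteq> g a1 b2" "g a1 b1 \<noteq> g a1 b3" "g a1 b2 \<noteq> g a1 b3"
    "g a2 b1 \<noteq> g a2 b2" "g a2 b1 \<noteq> g a2 b3" "g a2 b2 \<noteq> g a2 b3"
    "g a3 b1 \<noteq> g a3 b2" "g a3 b1 \<noteq> g a3 b3" "g a3 b2 \<noteq> g a3 b3"
    "g a1 b1 \<noteq> g a2 b1" "g a1 b1 \<noteq> g a3 b1" "g a2 b1 \<noteq> g a3 b1"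
    "g a1 b2 \<noteq> g a2 b2" "g a1 b2 \<noteq> g a3 b2" "g a2 b2 \<noteq> g a3 b2"
    "g a1 b3 \<noteq> g a2 b3" "g a1 b3 \<noteq> g a3 b3" "g a2 b3 \<noteq> g a3 b3"
    using rows cols by auto
  then show ?thesis by simp smt
qed

lemma card3_latin_array_transversal:
  assumes "card A = 3" "card B = 3"
    and rows: "\<And>x. x \<in> A \<Longrightarrow> inj_on (g x) B"
    and cols: "\<And>y. y \<in> B \<Longrightarrow> inj_on (\<lambda>x. g x y) A"
  obtains x1 x2 x3 y1 y2 y3 where "{x1, x2, x3} = A" "distinct [x1, x2, x3]"
    "{y1, y2, y3} = B" "distinct [y1, y2, y3]" "distinct [g x1 y1, g x2 y2, g x3 y3]"
proof -
  obtain x1 x2 x3 where A: "A = {x1, x2, x3}" "distinct [x1, x2, x3]"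
    using \<open>card A = 3\<close> by (auto simp: card_3_iff)
  obtain b1 b2 b3 where B: "B = {b1, b2, b3}" "distinct [b1, b2, b3]"
    using \<open>card B = 3\<close> by (auto simp: card_3_iff)
  have "\<exists>(y1, y2, y3) \<in> {(b1, b2, b3), (b1, b3, b2), (b2, b1, b3), (b2, b3, b1), (b3, b1, b2), (b3, b2, b1)}.
    g x1 y1 \<noteq> g x2 y2 \<and> g x1 y1 \<noteq> g x3 y3 \<and> g x2 y2 \<noteq> g x3 y3"
  proof (rule latin_3x3_transversal)
    show "g x b1 \<noteq> g x b2 \<and> g x b1 \<noteq> g x b3 \<and> g x b2 \<noteq> g x b3" if "x \<in> {x1, x2, x3}" for x
      using rows[of x] that A B by (auto simp: inj_on_def)
    show "g x1 y \<noteq> g x2 y \<and> g x1 y \<noteq> g x3 y \<and> g x2 y \<noteq> g x3 y" if "y \<in> {b1, b2, b3}" for y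
      using cols[of y] that A B by (auto simp: inj_on_def)
  qed
  then obtain y1 y2 y3 where "{y1, y2, y3} = B" "distinct [y1, y2, y3]"
      "distinct [g x1 y1, g x2 y2, g x3 y3]"
    using B by auto
  with A show thesis by (intro that) auto
qed

lemma maximum_matching_no_three_cross_triples:
  assumes "finite F" "maximum_matching F M" "A \<in> M" "B \<in> M" "A \<noteq> B"
    and F: "{x1, y1, c1} \<in> F" "{x2, y2, c2} \<in> F" "{x3, y3, c3} \<in> F"
    and x: "{x1, x2, x3} \<subseteq> A" "distinct [x1, x2, x3]"
    and y: "{y1, y2, y3} \<subseteq> B" "distinct [y1, y2, y3]"
    and c: "distinct [c1, c2, c3]" "{c1, c2, c3} \<inter> \<Union>M = {}"
  shows False
proof -
  have "matching F M" using assms(2) unfolding maximum_matching_def by blast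
  note disj = matching_disjoint[OF this]
  have "A \<inter> B = {}" using disj assms(3-5) .
  with x y c assms(3,4) have "distinct [x1, x2, x3, y1, y2, y3, c1, c2, c3]"
    by auto
  define N where "N = {{x1, y1, c1}, {x2, y2, c2}, {x3, y3, c3}}"
  have "card N \<le> card {A, B}"
  proof (rule maximum_matching_exchange[OF assms(1,2)])
    show "{A, B} \<subseteq> M" using assms(3,4) by blast
    show "matching F N" "{} \<notin> N"
      unfolding N_def matching_def using F \<open>distinct [x1, x2, x3, y1, y2, y3, c1, c2, c3]\<close>
      by auto
    have "\<Union>N \<subseteq> A \<union> B \<union> {c1, c2, c3}"
      unfolding N_def using x y by auto
    moreover have "X \<inter> (A \<union> B \<union> {c1, c2, c3}) = {}" if "X \<in> M - {A, B}" for X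
      using disj assms(3,4) c(2) that by auto
    ultimately show "\<Union>(M - {A, B}) \<inter> \<Union>N = {}" by blast
  qed
  moreover have "card N = 3"
  proof -
    have "{x1, y1, c1} \<noteq> {x2, y2, c2}" "{x1, y1, c1} \<noteq> {x3, y3, c3}" "{x2, y2, c2} \<noteq> {x3, y3, c3}"
      using \<open>distinct [x1, x2, x3, y1, y2, y3, c1, c2, c3]\<close> by (simp_all add: insert_eq_iff) blast+
    then show ?thesis unfolding N_def by simp
  qed
  ultimately show False using assms(5) by simp
qed

lemma D2_pair_cover_outer_array:
  assumes "uniform3 F" "linear_family F" "A \<in> M" "B \<in> M" "A \<inter> B = {}"
    and cover: "\<And>a b. a \<in> A \<Longrightarrow> b \<in> B \<Longrightarrow> \<exists>C \<in> D2_pair F M A B. a \<in> C \<and> b \<in> C"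
  obtains g where "\<And>a b. a \<in> A \<Longrightarrow> b \<in> B \<Longrightarrow> {a, b, g a b} \<in> F \<and> g a b \<notin> \<Union>M"
    "\<And>a. a \<in> A \<Longrightarrow> inj_on (g a) B" "\<And>b. b \<in> B \<Longrightarrow> inj_on (\<lambda>a. g a b) A"
proof -
  have "\<exists>c. {a, b, c} \<in> F \<and> c \<notin> \<Union>M" if ab: "a \<in> A" "b \<in> B" for a b
  proof -
    obtain C where "C \<in> D2_pair F M A B" "a \<in> C" "b \<in> C" using cover ab by blast
    moreover have "D2_pair F M A B \<subseteq> F" unfolding D2_pair_def D2_def by blast
    ultimately show ?thesis using D2_pair_member_eq[OF assms(1,3-5)] ab by blast
  qed
  then obtain g where g: "\<And>a b. a \<in> A \<Longrightarrow> b \<in> B \<Longrightarrow> {a, b, g a b} \<in> F \<and> g a b \<notin> \<Union>M"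
    by metis
  have same_triple: "{a, b, g a b} = {a', b', g a' b'}"
    if "a \<in> A" "b \<in> B" "a' \<in> A" "b' \<in> B" "g a b = g a' b'" "x \<in> {a, b} \<inter> {a', b'}"
    for a b a' b' x
  proof (rule linear_family_eq_if_two_common[OF assms(2)])
    show "{a, b, g a b} \<in> F" "{a', b', g a' b'} \<in> F" using g that by blast+
    show "x \<noteq> g a b" using g[of a b] that assms(3,4) by blast
    show "{x, g a b} \<subseteq> {a, b, g a b} \<inter> {a', b', g a' b'}" using that by auto
  qed simp
  show thesis
  proof (rule that[OF g])
    show "inj_on (g a) B" if "a \<in> A" for a
    proof (rule inj_onI)
      fix b b' assume "b \<in> B" "b' \<in> B" "g a b = g a b'"
      then have "{a, b, g a b} = {a, b', g a b'}"
        using same_triple[of a b a b' a] \<open>a \<in> A\<close> by simp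
      moreover have "b' \<noteq> a" "b' \<noteq> g a b'"
        using g[of a b'] \<open>a \<in> A\<close> \<open>b' \<in> B\<close> assms(4,5) by auto
      ultimately show "b = b'" using \<open>g a b = g a b'\<close> by blast
    qed
    show "inj_on (\<lambda>a. g a b) A" if "b \<in> B" for b
    proof (rule inj_onI)
      fix a a' assume "a \<in> A" "a' \<in> A" "g a b = g a' b"
      then have "{a, b, g a b} = {a', b, g a' b}"
        using same_triple[of a b a' b b] \<open>b \<in> B\<close> by simp
      moreover have "a' \<noteq> b" "a' \<noteq> g a' b"
        using g[of a' b] \<open>a' \<in> A\<close> \<open>b \<in> B\<close> assms(3,5) by auto
      ultimately show "a = a'" using \<open>g a b = g a' b\<close> by blast
    qed
  qed
qed

lemma D2_pair_misses_some_pair: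
  assumes "finite F" "uniform3 F" "linear_family F" "maximum_matching F M"
    and "A \<in> M" "B \<in> M" "A \<noteq> B"
  shows "\<exists>a\<in>A. \<exists>b\<in>B. \<not> (\<exists>C \<in> D2_pair F M A B. a \<in> C \<and> b \<in> C)"
proof (rule ccontr)
  assume "\<not> ?thesis"
  then have cover: "\<And>a b. a \<in> A \<Longrightarrow> b \<in> B \<Longrightarrow> \<exists>C \<in> D2_pair F M A B. a \<in> C \<and> b \<in> C"
    by blast
  have "matching F M" using assms(4) unfolding maximum_matching_def by blast
  then have "A \<inter> B = {}" using matching_disjoint assms(5-7) by blast
  have "A \<in> F" "B \<in> F" using \<open>matching F M\<close> assms(5,6) unfolding matching_def by blast+
  then have "card A = 3" "card B = 3" using assms(2) unfolding uniform3_def by blast+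
  obtain g where g: "\<And>a b. a \<in> A \<Longrightarrow> b \<in> B \<Longrightarrow> {a, b, g a b} \<in> F \<and> g a b \<notin> \<Union>M"
    and rows: "\<And>a. a \<in> A \<Longrightarrow> inj_on (g a) B" and cols: "\<And>b. b \<in> B \<Longrightarrow> inj_on (\<lambda>a. g a b) A"
    using D2_pair_cover_outer_array[OF assms(2,3,5,6) \<open>A \<inter> B = {}\<close> cover] by blast
  obtain x1 x2 x3 y1 y2 y3 where x: "{x1, x2, x3} = A" "distinct [x1, x2, x3]"
    and y: "{y1, y2, y3} = B" "distinct [y1, y2, y3]"
    and c: "distinct [g x1 y1, g x2 y2, g x3 y3]"
    using card3_latin_array_transversal[OF \<open>card A = 3\<close> \<open>card B = 3\<close> rows cols] by blast
  show False
  proof (rule maximum_matching_no_three_cross_triples[OF assms(1,4-7),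
        of x1 y1 "g x1 y1" x2 y2 "g x2 y2" x3 y3 "g x3 y3"])
    show "{g x1 y1, g x2 y2, g x3 y3} \<inter> \<Union>M = {}"
      using g x y by blast
  qed (use g x y c in auto)
qed

lemma card_D2_pair_le_covered_pairs:
  assumes "uniform3 F" "linear_family F" "finite A" "finite B" "A \<inter> B = {}"
  shows "card (D2_pair F M A B)
    \<le> card {p \<in> A \<times> B. \<exists>C \<in> D2_pair F M A B. fst p \<in> C \<and> snd p \<in> C}"
proof (rule card_le_card_covered_pairs)
  show "finite (A \<times> B)" using assms(3,4) by simp
  show "\<exists>p\<in>A \<times> B. fst p \<in> C \<and> snd p \<in> C" if "C \<in> D2_pair F M A B" for C
    using that unfolding D2_pair_def by auto
  show "C = C'"
    if "p \<in> A \<times> B" "C \<in> D2_pair F M A B" "C' \<in> D2_pair F M A B" "{fst p, snd p} \<subseteq> C \<inter> C'"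
    for p C C'
  proof (rule linear_family_eq_if_two_common[OF assms(2) _ _ _ _ that(4)])
    show "C \<in> F" "C' \<in> F" using that(2,3) unfolding D2_pair_def D2_def by auto
    then show "finite C" using uniform3_finite[OF assms(1)] by blast
    show "fst p \<noteq> snd p" using that(1) assms(5) by auto
  qed
qed

theorem proposition3:
  fixes F M :: "'a set set" and A B :: "'a set"
  assumes "finite F"
    and "uniform3 F"
    and "linear_family F"
    and "maximum_matching F M"
    and "A \<in> M" and "B \<in> M" and "A \<noteq> B"
  shows "card (D2_pair F M A B) \<le> 8"
proof -
  let ?covered = "{p \<in> A \<times> B. \<exists>C \<in> D2_pair F M A B. fst p \<in> C \<and> snd p \<in> C}"
  have "matching F M" using assms(4) unfolding maximum_matching_def by blast
  then have "A \<inter> B = {}" using matching_disjoint assms(5-7) by blast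
  have "A \<in> F" "B \<in> F" using \<open>matching F M\<close> assms(5,6) unfolding matching_def by blast+
  then have "card A = 3" "card B = 3" using assms(2) unfolding uniform3_def by blast+
  then have "finite A" "finite B" by (simp_all add: card_ge_0_finite)
  have "card (D2_pair F M A B) \<le> card ?covered"
    by (rule card_D2_pair_le_covered_pairs) fact+
  also have "\<dots> < card (A \<times> B)"
  proof (rule psubset_card_mono)
    obtain a b where "a \<in> A" "b \<in> B" "\<not> (\<exists>C \<in> D2_pair F M A B. a \<in> C \<and> b \<in> C)"
      using D2_pair_misses_some_pair[OF assms] by blast
    then have "(a, b) \<in> A \<times> B - ?covered" by simp
    then show "?covered \<subset> A \<times> B" by blast
  qed (simp add: \<open>finite A\<close> \<open>finite B\<close>)
  also have "card (A \<times> B) = 9" using \<open>card A = 3\<close> \<open>card B = 3\<close> by (simp add: card_cartesian_product)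
  finally show ?thesis by simp
qed

end
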